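(* Let $\Sigma$ be a finite set of tuple-generating dependencies (possibly cyclic, possibly with self-joins and constants) over a relational schema, and let $D$ be a finite database instance whose entries are constants and labeled nulls. Suppose a user inserts a tuple (or replaces all occurrences of a labeled null by a constant), and the Youtopia forward chase is then run without any frontier operations, i.e. only deterministic chase steps (as described in the context) are performed. Then the chase, viewed as a tree whose nodes are inserted tuples and whose edges are direct causality relationships, has the property that computation stops along every path after finitely many steps (unless the chase terminates, with all violations repaired, before such a point is reached). In particular, only finitely many tuples are inserted before the chase either terminates or reaches a state in which every pending violation is awaiting a frontier operation.
   Context: A tgd has the form $\Phi(\bar x,\bar y)\rightarrow \exists \bar z\,\Psi(\bar x,\bar z)$, with $\Phi,\Psi$ conjunctions of relational atoms over variables and constants; free variables are universally quantified. A database contains constants and labeled nulls. For a tgd $\sigma$ with free variables $\bar x$, LHS $\sigma_l(\bar x)$ and RHS $\sigma_r(\bar x,\bar y)$, a violation is an assignment $\bar a$ of database values to $\bar x$ with $D\models\sigma_l[\bar x\mapsto\bar a]$ but $D\not\models\sigma_r[\bar x\mapsto \bar a]$; its witness is the set of tuples of $D$ matching the LHS under this assignment. Specificity: a tuple $t=(a_1,\dots,a_k)$ is more specific than $t'=(a'_1,\dots,a'_k)$ (same relation) if the map $f(a'_i)=a_i$ is a well-defined function and $f$ is the identity on constants (values that are not labeled nulls). Forward chase (deterministic part): maintain a queue of violations, initially those created by the user's operation. Repeatedly pick a violation $v$ from the queue that is still present; instantiate the RHS of the violated tgd under the assignment of $v$, using fresh labeled nulls for the existentially quantified variables, yielding generated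 tuples. If for every generated tuple $t$ in relation $R$, $R$ contains no tuple more specific than $t$, insert all generated tuples (a deterministic repair), remove $v$, and append any new violations created by the insertions to the queue. Otherwise the generated tuples are set aside as positive frontier tuples (not inserted), the chase does not pursue that violation further, and it awaits a user frontier operation on it. The chase continues deterministically while some violation in the queue is deterministically repairable. *)

theory Defs
  imports Main
begin

text \<open>Database values: constants or labeled nulls (labels are naturals, so fresh nulls always exist).\<close>
datatype 'c val = Const 'c | Null nat

datatype ('v, 'c) trm = Var 'v | Cst 'c

type_synonym ('r, 'c) fact = "'r \<times> 'c val list"
type_synonym ('r, 'v, 'c) atom = "'r \<times> ('v, 'c) trm list"
type_synonym ('r, 'c) db = "('r, 'c) fact set"

text \<open>A tgd  lhs(x,y) --> exists z. rhs(x,z), both sides conjunctions (lists) of atoms.\<close>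
datatype ('r, 'v, 'c) tgd = TGD (lhs: "('r, 'v, 'c) atom list") (rhs: "('r, 'v, 'c) atom list")

fun trm_vars :: "('v, 'c) trm \<Rightarrow> 'v set" where
  "trm_vars (Var v) = {v}"
| "trm_vars (Cst c) = {}"

definition atoms_vars :: "('r, 'v, 'c) atom list \<Rightarrow> 'v set" where
  "atoms_vars as = (\<Union>(R, ts)\<in>set as. \<Union>t\<in>set ts. trm_vars t)"

definition univ_vars :: "('r, 'v, 'c) tgd \<Rightarrow> 'v set" where
  "univ_vars \<sigma> = atoms_vars (lhs \<sigma>)"

definition ex_vars :: "('r, 'v, 'c) tgd \<Rightarrow> 'v set" where
  "ex_vars \<sigma> = atoms_vars (rhs \<sigma>) - univ_vars \<sigma>"

fun eval_trm :: "('v \<Rightarrow> 'c val) \<Rightarrow> ('v, 'c) trm \<Rightarrow> 'c val" where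
  "eval_trm b (Var v) = b v"
| "eval_trm b (Cst c) = Const c"

definition inst_atom :: "('v \<Rightarrow> 'c val) \<Rightarrow> ('r, 'v, 'c) atom \<Rightarrow> ('r, 'c) fact" where
  "inst_atom b A = (fst A, map (eval_trm b) (snd A))"

definition inst :: "('v \<Rightarrow> 'c val) \<Rightarrow> ('r, 'v, 'c) atom list \<Rightarrow> ('r, 'c) fact set" where
  "inst b as = inst_atom b ` set as"

definition adom :: "('r, 'c) db \<Rightarrow> 'c val set" where
  "adom D = (\<Union>(R, vs)\<in>D. set vs)"

definition db_nulls :: "('r, 'c) db \<Rightarrow> nat set" where
  "db_nulls D = {n. Null n \<in> adom D}"

definition wf_db :: "('r \<Rightarrow> nat) \<Rightarrow> ('r, 'c) db \<Rightarrow> bool" where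
  "wf_db ar D \<longleftrightarrow> (\<forall>(R, vs)\<in>D. length vs = ar R)"

definition wf_tgd :: "('r \<Rightarrow> nat) \<Rightarrow> ('r, 'v, 'c) tgd \<Rightarrow> bool" where
  "wf_tgd ar \<sigma> \<longleftrightarrow> (\<forall>(R, ts)\<in>set (lhs \<sigma>) \<union> set (rhs \<sigma>). length ts = ar R)"

type_synonym ('r, 'v, 'c) viol = "('r, 'v, 'c) tgd \<times> ('v \<rightharpoonup> 'c val)"

definition is_violation :: "('r, 'v, 'c) tgd set \<Rightarrow> ('r, 'c) db \<Rightarrow> ('r, 'v, 'c) viol \<Rightarrow> bool" where
  "is_violation \<Sigma> D v \<longleftrightarrow>
     (let \<sigma> = fst v; a = snd v in
        \<sigma> \<in> \<Sigma> \<and> dom a = univ_vars \<sigma> \<and> ran a \<subseteq> adom D \<and>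
        inst (\<lambda>x. the (a x)) (lhs \<sigma>) \<subseteq> D \<and>
        \<not> (\<exists>b. (\<forall>x\<in>univ_vars \<sigma>. b x = the (a x)) \<and> inst b (rhs \<sigma>) \<subseteq> D))"

definition violations :: "('r, 'v, 'c) tgd set \<Rightarrow> ('r, 'c) db \<Rightarrow> ('r, 'v, 'c) viol set" where
  "violations \<Sigma> D = {v. is_violation \<Sigma> D v}"

definition generated :: "('r, 'c) db \<Rightarrow> ('r, 'v, 'c) viol \<Rightarrow> ('r, 'c) fact set \<Rightarrow> bool" where
  "generated D v G \<longleftrightarrow>
     (\<exists>b. (\<forall>x\<in>univ_vars (fst v). b x = the (snd v x)) \<and>
          inj_on b (ex_vars (fst v)) \<and>
          (\<forall>x\<in>ex_vars (fst v). \<exists>n. b x = Null n \<and> n \<notin> db_nulls D) \<and>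
          G = inst b (rhs (fst v)))"

definition more_specific :: "('r, 'c) fact \<Rightarrow> ('r, 'c) fact \<Rightarrow> bool" where
  "more_specific t t' \<longleftrightarrow>
     fst t = fst t' \<and> length (snd t) = length (snd t') \<and>
     (\<exists>f. (\<forall>c. f (Const c) = Const c) \<and> (\<forall>i<length (snd t'). f (snd t' ! i) = snd t ! i))"

definition det_repairable :: "('r, 'c) db \<Rightarrow> ('r, 'c) fact set \<Rightarrow> bool" where
  "det_repairable D G \<longleftrightarrow> (\<forall>t\<in>G. \<not> (\<exists>t'\<in>D. more_specific t' t))"

text \<open>Chase state: database, queue of violations, and the list of violations set aside
  (with their positive frontier tuples) awaiting a user frontier operation.\<close>
type_synonym ('r, 'v, 'c) cstate =
  "('r, 'c) db \<times> ('r, 'v, 'c) viol list \<times> (('r, 'v, 'c) viol \<times> ('r, 'c) fact set) list"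

inductive chase_step :: "('r, 'v, 'c) tgd set \<Rightarrow> ('r, 'v, 'c) cstate \<Rightarrow> ('r, 'v, 'c) cstate \<Rightarrow> bool"
  for \<Sigma> where
  drop_stale:
    "v \<notin> violations \<Sigma> D \<Longrightarrow>
     chase_step \<Sigma> (D, Q1 @ v # Q2, F) (D, Q1 @ Q2, F)"
| repair:
    "v \<in> violations \<Sigma> D \<Longrightarrow> generated D v G \<Longrightarrow> det_repairable D G \<Longrightarrow>
     set N = violations \<Sigma> (D \<union> G) - violations \<Sigma> D \<Longrightarrow> distinct N \<Longrightarrow>
     chase_step \<Sigma> (D, Q1 @ v # Q2, F) (D \<union> G, Q1 @ Q2 @ N, F)"
| set_aside:
    "v \<in> violations \<Sigma> D \<Longrightarrow> generated D v G \<Longrightarrow> \<not> det_repairable D G \<Longrightarrow>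
     chase_step \<Sigma> (D, Q1 @ v # Q2, F) (D, Q1 @ Q2, F @ [(v, G)])"

datatype ('r, 'c) user_op = Insert "('r, 'c) fact" | ReplaceNull nat 'c

fun subst_null :: "nat \<Rightarrow> 'c \<Rightarrow> 'c val \<Rightarrow> 'c val" where
  "subst_null n c (Null m) = (if m = n then Const c else Null m)"
| "subst_null n c (Const d) = Const d"

fun apply_op :: "('r, 'c) user_op \<Rightarrow> ('r, 'c) db \<Rightarrow> ('r, 'c) db" where
  "apply_op (Insert t) D = insert t D"
| "apply_op (ReplaceNull n c) D = (\<lambda>(R, vs). (R, map (subst_null n c) vs)) ` D"

fun wf_op :: "('r \<Rightarrow> nat) \<Rightarrow> ('r, 'c) user_op \<Rightarrow> bool" where
  "wf_op ar (Insert t) = wf_db ar {t}"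
| "wf_op ar (ReplaceNull n c) = True"

end

theory Submission
  imports Defs
begin

text \<open>
  Abstract a tuple to its \<^emph>\<open>shape\<close>:
  its relation, its constants, and for each labeled null only the set of positions at which
  that null occurs.  Two tuples of equal shape are each more specific than the other, so a
  deterministic repair, which never inserts a tuple subsumed by an existing one, always
  inserts a tuple whose shape is new in the database.  Every inserted tuple comes from the
  RHS of some tgd, so its relation, arity and constants (those of the current database or of
  the tgds) range over a finite set; and no chase step introduces other constants.  Hence
  all shapes the chase can ever create lie in one finite set.  Each step either adds a new
  shape (a repair) or keeps the database and shortens the queue (dropping a stale violation
  or setting one aside), so the pair (number of unused shapes, queue length) decreases
  lexicographically, and no infinite run of chase steps exists.
\<close>

definition null_shape :: "'c val list \<Rightarrow> 'c val \<Rightarrow> 'c + nat set" where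
  "null_shape xs v =
     (case v of Const c \<Rightarrow> Inl c | Null _ \<Rightarrow> Inr {j. j < length xs \<and> xs ! j = v})"

definition shape :: "('r, 'c) fact \<Rightarrow> 'r \<times> ('c + nat set) list" where
  "shape t = (fst t, map (null_shape (snd t)) (snd t))"

text \<open>Tuples of the same shape subsume each other: mapping each null of one tuple to the entry
  at any of its positions in the other is well defined.\<close>
lemma same_shape_more_specific:
  assumes "shape t = shape t'"
  shows "more_specific t' t"
proof -
  obtain R xs where t: "t = (R, xs)" by (cases t)
  obtain R' ys where t': "t' = (R', ys)" by (cases t')
  have R: "R' = R" and m: "map (null_shape xs) xs = map (null_shape ys) ys"
    using assms t t' by (auto simp: shape_def)
  have len: "length ys = length xs" using arg_cong[OF m, of length] by simp
  have pos: "null_shape xs (xs ! i) = null_shape ys (ys ! i)" if "i < length xs" for i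
    using m that len by (metis nth_map)
  define f where
    "f x = (case x of Const c \<Rightarrow> Const c | Null n \<Rightarrow> ys ! (SOME j. j < length xs \<and> xs ! j = x))"
    for x
  have "f (xs ! i) = ys ! i" if i: "i < length xs" for i
  proof (cases "xs ! i")
    case (Const c)
    then show ?thesis using pos[OF i] by (auto simp: null_shape_def f_def split: val.splits)
  next
    case (Null n)
    define j where "j = (SOME j. j < length xs \<and> xs ! j = xs ! i)"
    have "\<exists>j. j < length xs \<and> xs ! j = xs ! i" using i by blast
    then have j: "j < length xs \<and> xs ! j = xs ! i" unfolding j_def by (rule someI_ex)
    have "Inr {k. k < length xs \<and> xs ! k = Null n} = null_shape ys (ys ! i)"
      using pos[OF i] Null by (simp add: null_shape_def)
    then obtain m where "ys ! i = Null m"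
      and same: "{k. k < length xs \<and> xs ! k = Null n} = {k. k < length ys \<and> ys ! k = Null m}"
      by (cases "ys ! i") (simp_all add: null_shape_def)
    moreover have "j \<in> {k. k < length xs \<and> xs ! k = Null n}" using j Null by simp
    ultimately have "ys ! j = ys ! i" by (simp add: same)
    then show ?thesis using Null by (simp add: f_def j_def)
  qed
  moreover have "\<forall>c. f (Const c) = Const c" by (simp add: f_def)
  ultimately show ?thesis unfolding more_specific_def using t t' R len by auto
qed

definition shape_space :: "'r set \<Rightarrow> nat \<Rightarrow> 'c set \<Rightarrow> ('r \<times> ('c + nat set) list) set" where
  "shape_space Rs K C =
     {(R, ps). R \<in> Rs \<and> length ps \<le> K \<and> set ps \<subseteq> Inl ` C \<union> Inr ` Pow {..<K}}"

lemma finite_shape_space: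
  assumes "finite Rs" and "finite C"
  shows "finite (shape_space Rs K C)"
proof -
  let ?Ps = "{ps. set ps \<subseteq> Inl ` C \<union> Inr ` Pow {..<K} \<and> length ps \<le> K}"
  have "finite ?Ps" using assms(2) by (intro finite_lists_length_le) auto
  moreover have "shape_space Rs K C \<subseteq> Rs \<times> ?Ps" by (auto simp: shape_space_def)
  ultimately show ?thesis using assms(1) by (meson finite_SigmaI finite_subset)
qed

lemma shape_in_shape_space:
  assumes "fst t \<in> Rs" and "length (snd t) \<le> K"
    and "\<And>c. Const c \<in> set (snd t) \<Longrightarrow> c \<in> C"
  shows "shape t \<in> shape_space Rs K C"
proof -
  have "null_shape (snd t) x \<in> Inl ` C \<union> Inr ` Pow {..<K}" if x: "x \<in> set (snd t)" for x
  proof (cases x)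
    case (Const c)
    then show ?thesis using x assms(3) by (simp add: null_shape_def)
  next
    case (Null n)
    have "{j. j < length (snd t) \<and> snd t ! j = x} \<in> Pow {..<K}" using assms(2) by auto
    then show ?thesis using Null by (simp add: null_shape_def)
  qed
  then show ?thesis using assms(1,2) by (auto simp: shape_def shape_space_def)
qed

definition rhs_atoms :: "('r, 'v, 'c) tgd set \<Rightarrow> ('r, 'v, 'c) atom set" where
  "rhs_atoms \<Sigma> = (\<Union>\<sigma>\<in>\<Sigma>. set (rhs \<sigma>))"

definition rhs_width :: "('r, 'v, 'c) tgd set \<Rightarrow> nat" where
  "rhs_width \<Sigma> = Max (insert 0 ((\<lambda>A. length (snd A)) ` rhs_atoms \<Sigma>))"

definition rhs_consts :: "('r, 'v, 'c) tgd set \<Rightarrow> 'c set" where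
  "rhs_consts \<Sigma> = {c. \<exists>A\<in>rhs_atoms \<Sigma>. Cst c \<in> set (snd A)}"

definition db_consts :: "('r, 'c) db \<Rightarrow> 'c set" where
  "db_consts D = {c. Const c \<in> adom D}"

lemma finite_rhs_consts:
  assumes "finite \<Sigma>" shows "finite (rhs_consts \<Sigma>)"
proof -
  have "rhs_consts \<Sigma> \<subseteq> (\<Union>A\<in>rhs_atoms \<Sigma>. Cst -` set (snd A))"
    by (auto simp: rhs_consts_def)
  moreover have "finite (rhs_atoms \<Sigma>)" using assms by (simp add: rhs_atoms_def)
  then have "finite (\<Union>A\<in>rhs_atoms \<Sigma>. Cst -` set (snd A))"
    by (intro finite_UN_I) (auto intro: finite_vimageI simp: inj_def)
  ultimately show ?thesis by (rule finite_subset)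
qed

lemma finite_db_consts:
  assumes "finite D" shows "finite (db_consts D)"
proof -
  have "finite (adom D)" using assms by (auto simp: adom_def)
  then show ?thesis unfolding db_consts_def
    by (auto intro: finite_vimageI[of _ Const, unfolded vimage_def] simp: inj_def)
qed

lemma db_consts_Un: "db_consts (A \<union> B) = db_consts A \<union> db_consts B"
  by (auto simp: db_consts_def adom_def)

text \<open>A violated tgd has a nonempty RHS, so repairing it generates at least one tuple.\<close>
lemma generated_nonempty:
  assumes "v \<in> violations \<Sigma> D" and "generated D v G"
  shows "G \<noteq> {}"
proof -
  have "rhs (fst v) \<noteq> []"
    using assms(1) by (auto simp: violations_def is_violation_def Let_def inst_def)
  then show ?thesis using assms(2) by (auto simp: generated_def inst_def)
qed

lemma generated_fact_bounds:
  assumes fin: "finite \<Sigma>" and v: "v \<in> violations \<Sigma> D" and gen: "generated D v G"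
    and t: "t \<in> G"
  shows "fst t \<in> fst ` rhs_atoms \<Sigma>" and "length (snd t) \<le> rhs_width \<Sigma>"
    and "Const c \<in> set (snd t) \<Longrightarrow> c \<in> db_consts D \<union> rhs_consts \<Sigma>"
proof -
  obtain \<sigma> a where va: "v = (\<sigma>, a)" by (cases v)
  have \<sigma>: "\<sigma> \<in> \<Sigma>" and dom_a: "dom a = univ_vars \<sigma>" and ran_a: "ran a \<subseteq> adom D"
    using v va by (auto simp: violations_def is_violation_def Let_def)
  obtain b where b_univ: "\<forall>x\<in>univ_vars \<sigma>. b x = the (a x)"
    and b_ex: "\<forall>x\<in>ex_vars \<sigma>. \<exists>n. b x = Null n \<and> n \<notin> db_nulls D"
    and G: "G = inst b (rhs \<sigma>)"
    using gen va by (auto simp: generated_def)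
  obtain A where A: "A \<in> set (rhs \<sigma>)" and tA: "t = inst_atom b A"
    using t G by (auto simp: inst_def)
  have A_rhs: "A \<in> rhs_atoms \<Sigma>" using A \<sigma> by (auto simp: rhs_atoms_def)
  show "fst t \<in> fst ` rhs_atoms \<Sigma>" using A_rhs tA by (simp add: inst_atom_def)
  have "finite (rhs_atoms \<Sigma>)" using fin by (simp add: rhs_atoms_def)
  then show "length (snd t) \<le> rhs_width \<Sigma>"
    unfolding rhs_width_def using A_rhs tA by (intro Max_ge_iff[THEN iffD2]) (auto simp: inst_atom_def)
  assume "Const c \<in> set (snd t)"
  then obtain tm where tm: "tm \<in> set (snd A)" and c: "Const c = eval_trm b tm"
    using tA by (auto simp: inst_atom_def)
  show "c \<in> db_consts D \<union> rhs_consts \<Sigma>"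
  proof (cases tm)
    case (Cst d)
    then show ?thesis using c tm A_rhs by (auto simp: rhs_consts_def)
  next
    case (Var y)
    have y: "y \<in> atoms_vars (rhs \<sigma>)"
      using tm A Var unfolding atoms_vars_def by (cases A) force
    show ?thesis
    proof (cases "y \<in> univ_vars \<sigma>")
      case True
      then obtain w where "a y = Some w" using dom_a by auto
      moreover from this have "w \<in> adom D" using ran_a by (auto simp: ran_def)
      ultimately show ?thesis using c Var b_univ True by (auto simp: db_consts_def)
    next
      case False
      then have "y \<in> ex_vars \<sigma>" using y by (simp add: ex_vars_def)
      then obtain n where "b y = Null n" using b_ex by blast
      then show ?thesis using c Var by simp
    qed
  qed
qed

lemma repaired_fact_has_new_shape:
  assumes "det_repairable D G" and "t \<in> G"
  shows "shape t \<notin> shape ` D"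
proof
  assume "shape t \<in> shape ` D"
  then obtain t' where "t' \<in> D" and "shape t = shape t'" by auto
  then have "\<exists>t'\<in>D. more_specific t' t" using same_shape_more_specific by blast
  then show False using assms by (auto simp: det_repairable_def)
qed

lemma chase_step_db_consts:
  assumes step: "chase_step \<Sigma> s s'" and fin: "finite \<Sigma>"
  shows "db_consts (fst s') \<subseteq> db_consts (fst s) \<union> rhs_consts \<Sigma>"
  using step
proof cases
  case (repair v D G N Q1 Q2 F)
  have "db_consts G \<subseteq> db_consts D \<union> rhs_consts \<Sigma>"
  proof
    fix c assume "c \<in> db_consts G"
    then obtain t where "t \<in> G" and "Const c \<in> set (snd t)"
      by (auto simp: db_consts_def adom_def)
    then show "c \<in> db_consts D \<union> rhs_consts \<Sigma>"
      using generated_fact_bounds(3)[OF fin repair(3,4)] by blast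
  qed
  then show ?thesis using repair(1,2) by (auto simp: db_consts_Un)
qed auto

definition chase_measure ::
  "('r, 'v, 'c) tgd set \<Rightarrow> 'c set \<Rightarrow> ('r, 'v, 'c) cstate \<Rightarrow> nat \<times> nat" where
  "chase_measure \<Sigma> C s =
     (card (shape_space (fst ` rhs_atoms \<Sigma>) (rhs_width \<Sigma>) C - shape ` fst s),
      length (fst (snd s)))"

lemma chase_step_decreases:
  assumes step: "chase_step \<Sigma> s s'" and fin: "finite \<Sigma>" "finite C"
    and C: "db_consts (fst s) \<union> rhs_consts \<Sigma> \<subseteq> C"
  shows "(chase_measure \<Sigma> C s', chase_measure \<Sigma> C s) \<in> less_than <*lex*> less_than"
  using step
proof cases
  case (repair v D G N Q1 Q2 F)
  let ?U = "shape_space (fst ` rhs_atoms \<Sigma>) (rhs_width \<Sigma>) C"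
  obtain t where t: "t \<in> G" using generated_nonempty[OF repair(3,4)] by blast
  note bounds = generated_fact_bounds[OF fin(1) repair(3,4) t]
  have "shape t \<in> ?U"
    using bounds C repair(1) by (intro shape_in_shape_space) auto
  moreover have "shape t \<notin> shape ` D" using repaired_fact_has_new_shape[OF repair(5) t] .
  ultimately have "?U - shape ` (D \<union> G) \<subset> ?U - shape ` D" using t by auto
  moreover have "finite ?U" using fin by (simp add: finite_shape_space rhs_atoms_def)
  ultimately have "card (?U - shape ` (D \<union> G)) < card (?U - shape ` D)"
    by (simp add: psubset_card_mono)
  then show ?thesis using repair(1,2) by (simp add: chase_measure_def)
qed (auto simp: chase_measure_def)


theorem lemma1:
  fixes \<Sigma> :: "('r, 'v, 'c) tgd set" and D :: "('r, 'c) db" and ar :: "'r \<Rightarrow> nat"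
    and op :: "('r, 'c) user_op" and Q0 :: "('r, 'v, 'c) viol list"
  assumes "finite \<Sigma>" and "finite D"
    and "\<forall>\<sigma>\<in>\<Sigma>. wf_tgd ar \<sigma>" and "wf_db ar D" and "wf_op ar op"
    and "set Q0 = violations \<Sigma> (apply_op op D) - violations \<Sigma> D" and "distinct Q0"
  shows "\<not> (\<exists>s. s 0 = (apply_op op D, Q0, []) \<and> (\<forall>i. chase_step \<Sigma> (s i) (s (Suc i))))"
proof
  assume "\<exists>s. s 0 = (apply_op op D, Q0, []) \<and> (\<forall>i. chase_step \<Sigma> (s i) (s (Suc i)))"
  then obtain s where s0: "s 0 = (apply_op op D, Q0, [])"
    and steps: "\<And>i. chase_step \<Sigma> (s i) (s (Suc i))" by blast
  define C where "C = db_consts (apply_op op D) \<union> rhs_consts \<Sigma>"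
  have "finite (apply_op op D)" using \<open>finite D\<close> by (cases op) auto
  then have fin_C: "finite C"
    using \<open>finite \<Sigma>\<close> by (simp add: C_def finite_db_consts finite_rhs_consts)
  have consts_bounded: "db_consts (fst (s i)) \<union> rhs_consts \<Sigma> \<subseteq> C" for i
  proof (induction i)
    case 0
    then show ?case using s0 by (simp add: C_def)
  next
    case (Suc i)
    then show ?case using chase_step_db_consts[OF steps \<open>finite \<Sigma>\<close>, of i] by blast
  qed
  have descent: "(chase_measure \<Sigma> C (s (Suc i)), chase_measure \<Sigma> C (s i))
      \<in> less_than <*lex*> less_than" for i
    using chase_step_decreases[OF steps \<open>finite \<Sigma>\<close> fin_C consts_bounded] .
  have "wf (less_than <*lex*> less_than)" by (intro wf_lex_prod wf_less_than)
  then obtain k where "(chase_measure \<Sigma> C (s (Suc k)), chase_measure \<Sigma> C (s k))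
      \<notin> less_than <*lex*> less_than"
    by (rule wf_no_infinite_down_chainE)
  then show False using descent by blast
qed

end
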